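(* Let $d\ge0$. The integral Schur algebra $S_{\mathbb{Z}}(2,d)$, viewed inside $S_{\mathbb{Q}}(2,d)$, coincides with the subring of $S_{\mathbb{Q}}(2,d)$ generated by all divided powers $e^{(m)}=e^m/m!$ and $f^{(m)}=f^m/m!$ ($m\ge 0$). Moreover, $S_{\mathbb{Z}}(2,d)$ has a $\mathbb{Z}$-basis consisting of all $$f^{(a)}\binom{H_2}{b}e^{(c)}\qquad (a,b,c\ge 0,\ a+b+c\le d),$$ and another $\mathbb{Z}$-basis consisting of all $$e^{(a)}\binom{H_1}{b}f^{(c)}\qquad (a,b,c\ge 0,\ a+b+c\le d).$$
   Context: Let $E=\mathbb{Q}^2$ with standard basis $e_1,e_2$ and let $E_{\mathbb{Z}}=\mathbb{Z}e_1\oplus\mathbb{Z}e_2$. Let $\rho_d:U(\mathfrak{gl}_2)\to\mathrm{End}_{\mathbb{Q}}(E^{\otimes d})$ be the representation of the universal enveloping algebra of $\mathfrak{gl}_2(\mathbb{Q})$ in which $x\in\mathfrak{gl}_2$ acts as $\sum_{i=1}^d 1\otimes\cdots\otimes x\otimes\cdots\otimes 1$ ($x$ in the $i$-th slot); its image is the rational Schur algebra $S_{\mathbb{Q}}(2,d)$ (equal to the image of the group algebra of $GL_2(\mathbb{Q})$ acting diagonally, and to $\mathrm{End}_{\mathbb{Q}\Sigma_d}(E^{\otimes d})$, $\Sigma_d$ acting by place permutations). The integral Schur algebra is $S_{\mathbb{Z}}(2,d)=\mathrm{End}_{\mathbb{Z}\Sigma_d}(E_{\mathbb{Z}}^{\otimes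 d})$, regarded as a subring of $S_{\mathbb{Q}}(2,d)$ by extension of scalars. Write $e,f,H_1,H_2$ for the images under $\rho_d$ of the matrix units $e_{12},e_{21},e_{11},e_{22}$ respectively. For an element $T$ of a $\mathbb{Q}$-algebra and an integer $m\ge0$, $T^{(m)}=T^m/m!$ and $\binom{T}{m}=T(T-1)\cdots(T-m+1)/m!$. *)

theory Defs
  imports Complex_Main "HOL-Combinatorics.Permutations"
begin

text \<open>Basis of E^{tensor d}: words i = (i_0,...,i_{d-1}) with i_k in {1,2}, standing for
  e_{i_0} tensor ... tensor e_{i_{d-1}}.  Endomorphisms of E^{tensor d} over Q are represented
  by their matrices w.r.t. this basis: functions M :: nat list => nat list => rat,
  M i j = coefficient of basis vector i in M(basis vector j), zero outside Idx d.\<close>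

definition Idx :: "nat \<Rightarrow> nat list set" where
  "Idx d = {xs. length xs = d \<and> set xs \<subseteq> {1,2}}"

type_synonym mat = "nat list \<Rightarrow> nat list \<Rightarrow> rat"

definition is_mat :: "nat \<Rightarrow> mat \<Rightarrow> bool" where
  "is_mat d M \<longleftrightarrow> (\<forall>i j. i \<notin> Idx d \<or> j \<notin> Idx d \<longrightarrow> M i j = 0)"

definition mmul :: "nat \<Rightarrow> mat \<Rightarrow> mat \<Rightarrow> mat" where
  "mmul d M N = (\<lambda>i k. \<Sum>j\<in>Idx d. M i j * N j k)"

definition mone :: "nat \<Rightarrow> mat" where
  "mone d = (\<lambda>i j. if i \<in> Idx d \<and> i = j then 1 else 0)"

definition madd :: "mat \<Rightarrow> mat \<Rightarrow> mat" where
  "madd M N = (\<lambda>i j. M i j + N i j)"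

definition mneg :: "mat \<Rightarrow> mat" where
  "mneg M = (\<lambda>i j. - M i j)"

definition msmult :: "rat \<Rightarrow> mat \<Rightarrow> mat" where
  "msmult c M = (\<lambda>i j. c * M i j)"

primrec mpow :: "nat \<Rightarrow> mat \<Rightarrow> nat \<Rightarrow> mat" where
  "mpow d M 0 = mone d"
| "mpow d M (Suc n) = mmul d M (mpow d M n)"

definition divpow :: "nat \<Rightarrow> mat \<Rightarrow> nat \<Rightarrow> mat" where
  "divpow d T m = msmult (1 / of_nat (fact m)) (mpow d T m)"

primrec mfall :: "nat \<Rightarrow> mat \<Rightarrow> nat \<Rightarrow> mat" where
  "mfall d T 0 = mone d"
| "mfall d T (Suc m) = mmul d (mfall d T m) (madd T (mneg (msmult (of_nat m) (mone d))))"

definition mbinom :: "nat \<Rightarrow> mat \<Rightarrow> nat \<Rightarrow> mat" where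
  "mbinom d T m = msmult (1 / of_nat (fact m)) (mfall d T m)"

text \<open>rho_d(x) for x in gl_2(Q), given by its entries x a b (a, b in {1,2}):
  x acts on the k-th tensor slot, summed over k.\<close>
definition rho :: "nat \<Rightarrow> (nat \<Rightarrow> nat \<Rightarrow> rat) \<Rightarrow> mat" where
  "rho d x = (\<lambda>i j. if i \<in> Idx d \<and> j \<in> Idx d then
      (\<Sum>k<d. if (\<forall>l<d. l \<noteq> k \<longrightarrow> i ! l = j ! l) then x (i ! k) (j ! k) else 0)
    else 0)"

definition matunit :: "nat \<Rightarrow> nat \<Rightarrow> (nat \<Rightarrow> nat \<Rightarrow> rat)" where
  "matunit a b = (\<lambda>p q. if p = a \<and> q = b then 1 else 0)"

definition Eop :: "nat \<Rightarrow> mat" where "Eop d = rho d (matunit 1 2)"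
definition Fop :: "nat \<Rightarrow> mat" where "Fop d = rho d (matunit 2 1)"
definition H1op :: "nat \<Rightarrow> mat" where "H1op d = rho d (matunit 1 1)"
definition H2op :: "nat \<Rightarrow> mat" where "H2op d = rho d (matunit 2 2)"

definition placeperm :: "nat \<Rightarrow> (nat \<Rightarrow> nat) \<Rightarrow> mat" where
  "placeperm d \<sigma> = (\<lambda>i j. if i \<in> Idx d \<and> j \<in> Idx d \<and> i = map (\<lambda>k. j ! \<sigma> k) [0..<d]
                          then 1 else 0)"

text \<open>Integral Schur algebra S_Z(2,d) = End_{Z Sigma_d}(E_Z^{tensor d}) inside End_Q(E^{tensor d}):
  matrices with integer entries commuting with all place permutations.\<close>
definition SZ :: "nat \<Rightarrow> mat set" where
  "SZ d = {M. is_mat d M \<and> (\<forall>i j. M i j \<in> \<int>) \<and>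
     (\<forall>\<sigma>. \<sigma> permutes {..<d} \<longrightarrow> mmul d M (placeperm d \<sigma>) = mmul d (placeperm d \<sigma>) M)}"

inductive_set divpow_ring :: "nat \<Rightarrow> mat set" for d where
  gen_e: "divpow d (Eop d) m \<in> divpow_ring d"
| gen_f: "divpow d (Fop d) m \<in> divpow_ring d"
| one: "mone d \<in> divpow_ring d"
| zero: "(\<lambda>i j. 0) \<in> divpow_ring d"
| add: "M \<in> divpow_ring d \<Longrightarrow> N \<in> divpow_ring d \<Longrightarrow> madd M N \<in> divpow_ring d"
| neg: "M \<in> divpow_ring d \<Longrightarrow> mneg M \<in> divpow_ring d"
| mul: "M \<in> divpow_ring d \<Longrightarrow> N \<in> divpow_ring d \<Longrightarrow> mmul d M N \<in> divpow_ring d"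

definition is_Z_basis :: "mat set \<Rightarrow> 'a set \<Rightarrow> ('a \<Rightarrow> mat) \<Rightarrow> bool" where
  "is_Z_basis S T B \<longleftrightarrow> (\<forall>t\<in>T. B t \<in> S) \<and>
     (\<forall>M\<in>S. \<exists>!c::'a \<Rightarrow> int. (\<forall>t. t \<notin> T \<longrightarrow> c t = 0) \<and>
        M = (\<lambda>i j. \<Sum>t\<in>T. of_int (c t) * B t i j))"

definition triples :: "nat \<Rightarrow> (nat \<times> nat \<times> nat) set" where
  "triples d = {(a,b,c). a + b + c \<le> d}"

end

(* Index the basis words of the d-th tensor power by the set of positions carrying e_2.  A matrix
   commutes with all place permutations exactly when its entry at (I, J) depends only on the
   overlap type (|I - J|, |I \<inter> J|, |J - I|), because pairs of subsets of equal overlap type are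
   conjugate under the symmetric group.  Counting intermediate subsets shows that the entries of
   f^(a) binom(H_2, b) e^(c) form a unitriangular integer matrix indexed by overlap types, so these
   elements are a Z-basis of S_Z(2,d); the involution exchanging e_1 and e_2 carries them to the
   second family.  The divided powers lie in S_Z(2,d), and conversely every binom(H_2, b) lies in
   the ring they generate: Kostant's formula
     e^(b) f^(b) = sum_u f^(u) binom(H_1 - H_2 - 2u, b - u) e^(u)
   yields all binom(H_1 - H_2 + s, j) by induction on j, and binomial inversion turns these into
   the projections onto the weight spaces. *)

theory Submission
  imports Defs "HOL-Computational_Algebra.Formal_Power_Series"
begin

section \<open>Basis words and matrix entries\<close>

definition word_of :: "nat \<Rightarrow> nat set \<Rightarrow> nat list" where
  "word_of d S = map (\<lambda>k. if k \<in> S then 2 else 1) [0..<d]"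

definition twos :: "nat list \<Rightarrow> nat set" where
  "twos w = {k. k < length w \<and> w ! k = 2}"

lemma length_word_of [simp]: "length (word_of d S) = d"
  by (simp add: word_of_def)

lemma nth_word_of [simp]: "k < d \<Longrightarrow> word_of d S ! k = (if k \<in> S then 2 else 1)"
  by (simp add: word_of_def)

lemma word_of_in_Idx [simp]: "word_of d S \<in> Idx d"
  by (auto simp: Idx_def word_of_def)

lemma twos_word_of [simp]: "S \<subseteq> {..<d} \<Longrightarrow> twos (word_of d S) = S"
  by (auto simp: twos_def split: if_splits)

lemma twos_subset: "w \<in> Idx d \<Longrightarrow> twos w \<subseteq> {..<d}"
  by (auto simp: twos_def Idx_def)

lemma word_of_twos: assumes "w \<in> Idx d" shows "word_of d (twos w) = w"
proof (rule nth_equalityI)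
  show "length (word_of d (twos w)) = length w"
    using assms by (simp add: Idx_def)
  fix k assume "k < length (word_of d (twos w))"
  then have "k < d"
    by simp
  moreover have "w ! k \<in> {1, 2}"
    using assms \<open>k < d\<close> nth_mem[of k w] unfolding Idx_def by blast
  ultimately show "word_of d (twos w) ! k = w ! k"
    using assms by (auto simp: twos_def Idx_def)
qed

lemma word_of_eq_iff: "I \<subseteq> {..<d} \<Longrightarrow> J \<subseteq> {..<d} \<Longrightarrow> word_of d I = word_of d J \<longleftrightarrow> I = J"
  by (metis twos_word_of)

lemma obtain_word_of:
  assumes "w \<in> Idx d"
  obtains S where "S \<subseteq> {..<d}" "w = word_of d S"
  using assms word_of_twos twos_subset by metis

lemma bij_betw_word_of: "bij_betw (word_of d) (Pow {..<d}) (Idx d)"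
  by (rule bij_betw_byWitness[where f' = twos]) (use twos_subset in \<open>auto simp: word_of_twos\<close>)

lemma sum_Idx_eq_sum_Pow: "(\<Sum>w\<in>Idx d. F w) = (\<Sum>S\<in>Pow {..<d}. F (word_of d S))"
  using sum.reindex_bij_betw[OF bij_betw_word_of, of F] by simp

lemma mmul_eq_sum_Pow: "mmul d M N i k = (\<Sum>S\<in>Pow {..<d}. M i (word_of d S) * N (word_of d S) k)"
  by (simp add: mmul_def sum_Idx_eq_sum_Pow)

lemma mat_eqI:
  assumes "is_mat d M" "is_mat d N"
    and "\<And>I J. I \<subseteq> {..<d} \<Longrightarrow> J \<subseteq> {..<d} \<Longrightarrow> M (word_of d I) (word_of d J) = N (word_of d I) (word_of d J)"
  shows "M = N"
proof (intro ext)
  fix i j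
  show "M i j = N i j"
  proof (cases "i \<in> Idx d \<and> j \<in> Idx d")
    case True
    then show ?thesis
      using assms(3) by (metis obtain_word_of)
  next
    case False
    then show ?thesis
      using assms(1,2) by (auto simp: is_mat_def)
  qed
qed

lemma is_mat_zero [simp]: "is_mat d (\<lambda>i j. 0)"
  and is_mat_mone [simp]: "is_mat d (mone d)"
  and is_mat_rho [simp]: "is_mat d (rho d x)"
  and is_mat_placeperm [simp]: "is_mat d (placeperm d \<sigma>)"
  by (auto simp: is_mat_def mone_def rho_def placeperm_def)

lemma is_mat_mmul [simp]: "is_mat d M \<Longrightarrow> is_mat d N \<Longrightarrow> is_mat d (mmul d M N)"
  and is_mat_madd [simp]: "is_mat d M \<Longrightarrow> is_mat d N \<Longrightarrow> is_mat d (madd M N)"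
  and is_mat_mneg [simp]: "is_mat d M \<Longrightarrow> is_mat d (mneg M)"
  and is_mat_msmult [simp]: "is_mat d M \<Longrightarrow> is_mat d (msmult c M)"
  by (auto simp: is_mat_def mmul_def madd_def mneg_def msmult_def)

lemma is_mat_sum [intro]: "(\<And>u. u \<in> S \<Longrightarrow> is_mat d (X u)) \<Longrightarrow> is_mat d (\<lambda>i j. \<Sum>u\<in>S. X u i j)"
  by (auto simp: is_mat_def)

lemma is_mat_mpow [simp]: "is_mat d M \<Longrightarrow> is_mat d (mpow d M n)"
  and is_mat_mfall [simp]: "is_mat d M \<Longrightarrow> is_mat d (mfall d M n)"
  by (induct n) auto

lemma is_mat_divpow [simp]: "is_mat d M \<Longrightarrow> is_mat d (divpow d M n)"
  and is_mat_mbinom [simp]: "is_mat d M \<Longrightarrow> is_mat d (mbinom d M n)"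
  by (simp_all add: divpow_def mbinom_def)

lemma is_mat_Eop [simp]: "is_mat d (Eop d)"
  and is_mat_Fop [simp]: "is_mat d (Fop d)"
  and is_mat_H2op [simp]: "is_mat d (H2op d)"
  by (simp_all add: Eop_def Fop_def H2op_def)

lemma mmul_assoc: "mmul d (mmul d A B) C = mmul d A (mmul d B C)"
  unfolding mmul_def
  by (auto simp: sum_distrib_left sum_distrib_right mult.assoc intro!: sum.swap[THEN trans])

lemma madd_mmul_distrib:
  "mmul d (madd A B) C = madd (mmul d A C) (mmul d B C)"
  "mmul d C (madd A B) = madd (mmul d C A) (mmul d C B)"
  by (auto simp: mmul_def madd_def sum.distrib algebra_simps)

lemma mneg_mmul_distrib:
  "mmul d (mneg A) C = mneg (mmul d A C)" "mmul d C (mneg A) = mneg (mmul d C A)"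
  by (auto simp: mmul_def mneg_def sum_negf)

lemma divpow_0 [simp]: "divpow d M 0 = mone d"
  by (simp add: divpow_def msmult_def)

definition diag_mat :: "nat \<Rightarrow> (nat \<Rightarrow> rat) \<Rightarrow> mat" where
  "diag_mat d h = (\<lambda>i j. if i \<in> Idx d \<and> i = j then h (card (twos i)) else 0)"

lemma is_mat_diag_mat [simp]: "is_mat d (diag_mat d h)"
  by (auto simp: is_mat_def diag_mat_def)

lemma diag_mat_word_of:
  "I \<subseteq> {..<d} \<Longrightarrow> J \<subseteq> {..<d} \<Longrightarrow>
    diag_mat d h (word_of d I) (word_of d J) = (if I = J then h (card I) else 0)"
  by (auto simp: diag_mat_def word_of_eq_iff)

lemma mmul_diag_mat_left:
  assumes "I \<subseteq> {..<d}"
  shows "mmul d (diag_mat d h) M (word_of d I) k = h (card I) * M (word_of d I) k"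
proof -
  have "mmul d (diag_mat d h) M (word_of d I) k
      = (\<Sum>J\<in>Pow {..<d}. if J = I then h (card I) * M (word_of d I) k else 0)"
    unfolding mmul_eq_sum_Pow by (rule sum.cong) (auto simp: diag_mat_word_of assms)
  then show ?thesis
    using assms by simp
qed

lemma mmul_diag_mat: "mmul d (diag_mat d h) (diag_mat d g) = diag_mat d (\<lambda>x. h x * g x)"
  by (rule mat_eqI[of d]) (auto simp: mmul_diag_mat_left diag_mat_word_of)

lemma mone_eq_diag_mat: "mone d = diag_mat d (\<lambda>_. 1)"
  and madd_diag_mat: "madd (diag_mat d h) (diag_mat d g) = diag_mat d (\<lambda>x. h x + g x)"
  and mneg_diag_mat: "mneg (diag_mat d h) = diag_mat d (\<lambda>x. - h x)"
  and msmult_diag_mat: "msmult c (diag_mat d h) = diag_mat d (\<lambda>x. c * h x)"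
  by (auto simp: mone_def madd_def mneg_def msmult_def diag_mat_def fun_eq_iff)

lemma diag_mat_sum: "diag_mat d (\<lambda>x. \<Sum>k\<in>S. f k x) = (\<lambda>i j. \<Sum>k\<in>S. diag_mat d (f k) i j)"
  by (auto simp: diag_mat_def fun_eq_iff)

lemma diag_mat_cong:
  assumes "\<And>x. x \<le> d \<Longrightarrow> f x = g x"
  shows "diag_mat d f = diag_mat d g"
proof -
  have "card (twos i) \<le> d" if "i \<in> Idx d" for i
    using card_mono[OF _ twos_subset[OF that]] by simp
  then show ?thesis
    using assms by (auto simp: diag_mat_def fun_eq_iff)
qed

lemma mmul_mone_left: "is_mat d M \<Longrightarrow> mmul d (mone d) M = M"
  by (rule mat_eqI[of d]) (simp_all add: mone_eq_diag_mat mmul_diag_mat_left)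

lemma mfall_diag_mat: "mfall d (diag_mat d h) m = diag_mat d (\<lambda>x. \<Prod>i<m. h x - of_nat i)"
  by (induct m) (simp_all add: mone_eq_diag_mat msmult_diag_mat mneg_diag_mat madd_diag_mat mmul_diag_mat)

lemma mbinom_diag_mat: "mbinom d (diag_mat d h) m = diag_mat d (\<lambda>x. h x gchoose m)"
  by (simp add: mbinom_def mfall_diag_mat msmult_diag_mat gbinomial_prod_rev atLeast0LessThan)

definition extends_by :: "nat \<Rightarrow> 'a set \<Rightarrow> 'a set \<Rightarrow> rat" where
  "extends_by n I J = (if I \<subseteq> J \<and> card (J - I) = n then 1 else 0)"

lemma sum_boole_card: "finite A \<Longrightarrow> (\<Sum>k\<in>A. if P k then 1 else 0) = (of_nat (card {k\<in>A. P k}) :: 'a::semiring_1)"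
  by (simp add: sum.inter_filter[symmetric])

lemma rho_word_of:
  assumes "I \<subseteq> {..<d}" "J \<subseteq> {..<d}"
  shows "rho d x (word_of d I) (word_of d J) =
    (\<Sum>k<d. if I - {k} = J - {k} then x (if k \<in> I then 2 else 1) (if k \<in> J then 2 else 1) else 0)"
proof -
  have "(\<forall>l<d. l \<noteq> k \<longrightarrow> word_of d I ! l = word_of d J ! l) \<longleftrightarrow> I - {k} = J - {k}" for k
    using assms by (auto 0 3 split: if_splits)
  then show ?thesis
    by (auto simp: rho_def intro!: sum.cong)
qed

lemma Eop_word_of:
  assumes I: "I \<subseteq> {..<d}" and J: "J \<subseteq> {..<d}"
  shows "Eop d (word_of d I) (word_of d J) = extends_by 1 I J"
proof -
  have "Eop d (word_of d I) (word_of d J) = (\<Sum>k<d. if k \<notin> I \<and> J = insert k I then 1 else 0)"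
    unfolding Eop_def rho_word_of[OF I J] by (intro sum.cong) (auto simp: matunit_def)
  also have "\<dots> = of_nat (card {k\<in>{..<d}. k \<notin> I \<and> J = insert k I})"
    by (simp add: sum_boole_card)
  also have "{k\<in>{..<d}. k \<notin> I \<and> J = insert k I} = (if I \<subseteq> J \<and> card (J - I) = 1 then J - I else {})"
  proof (cases "I \<subseteq> J \<and> card (J - I) = 1")
    case True
    then obtain k where "J - I = {k}"
      by (auto simp: card_1_singleton_iff)
    with True J show ?thesis
      by auto
  qed (auto simp: insert_Diff_if)
  finally show ?thesis
    by (auto simp: extends_by_def)
qed

lemma H2op_eq_diag_mat: "H2op d = diag_mat d of_nat"
proof (rule mat_eqI[of d])
  fix I J assume I: "I \<subseteq> {..<d}" and J: "J \<subseteq> {..<d}"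
  have "H2op d (word_of d I) (word_of d J) = (\<Sum>k<d. if I = J \<and> k \<in> I then 1 else 0)"
    unfolding H2op_def rho_word_of[OF I J] by (intro sum.cong) (auto simp: matunit_def)
  also have "\<dots> = of_nat (card {k\<in>{..<d}. I = J \<and> k \<in> I})"
    by (simp add: sum_boole_card)
  also have "{k\<in>{..<d}. I = J \<and> k \<in> I} = (if I = J then I else {})"
    using I by auto
  finally show "H2op d (word_of d I) (word_of d J) = diag_mat d of_nat (word_of d I) (word_of d J)"
    using I J by (simp add: diag_mat_word_of)
qed auto

definition flip_letter :: "nat \<Rightarrow> nat" where
  "flip_letter a = (if a = 1 then 2 else if a = 2 then 1 else a)"

definition swap_mat :: "mat \<Rightarrow> mat" where
  "swap_mat M = (\<lambda>i j. M (map flip_letter i) (map flip_letter j))"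

lemma flip_letter_flip_letter [simp]: "flip_letter (flip_letter a) = a"
  by (simp add: flip_letter_def)

lemma flip_letter_involution [simp]: "flip_letter \<circ> flip_letter = id"
  by (simp add: fun_eq_iff)

lemma map_flip_letter_involution [simp]: "map flip_letter (map flip_letter w) = w"
  by simp

lemma map_flip_letter_eq_iff [simp]: "map flip_letter v = map flip_letter w \<longleftrightarrow> v = w"
  by (metis map_flip_letter_involution)

lemma map_flip_letter_in_Idx [simp]: "map flip_letter w \<in> Idx d \<longleftrightarrow> w \<in> Idx d"
  by (auto simp: Idx_def flip_letter_def)

lemma map_flip_letter_word_of: "map flip_letter (word_of d S) = word_of d ({..<d} - S)"
  by (simp add: word_of_def flip_letter_def)

lemma swap_mat_word_of:
  "swap_mat M (word_of d I) (word_of d J) = M (word_of d ({..<d} - I)) (word_of d ({..<d} - J))"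
  by (simp add: swap_mat_def map_flip_letter_word_of)

lemma swap_mat_swap_mat [simp]: "swap_mat (swap_mat M) = M"
  by (simp add: swap_mat_def)

lemma is_mat_swap_mat [simp]: "is_mat d (swap_mat M) \<longleftrightarrow> is_mat d M"
  unfolding is_mat_def swap_mat_def by (metis map_flip_letter_in_Idx map_flip_letter_involution)

lemma swap_mat_mmul: "swap_mat (mmul d M N) = mmul d (swap_mat M) (swap_mat N)"
  unfolding swap_mat_def mmul_def
  by (intro ext sum.reindex_bij_witness[where i = "map flip_letter" and j = "map flip_letter"]) auto

lemma swap_mat_mone [simp]: "swap_mat (mone d) = mone d"
  by (auto simp: swap_mat_def mone_def fun_eq_iff)

lemma swap_mat_madd: "swap_mat (madd M N) = madd (swap_mat M) (swap_mat N)"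
  and swap_mat_mneg: "swap_mat (mneg M) = mneg (swap_mat M)"
  and swap_mat_msmult: "swap_mat (msmult c M) = msmult c (swap_mat M)"
  by (simp_all add: swap_mat_def madd_def mneg_def msmult_def)

lemma swap_mat_divpow: "swap_mat (divpow d M n) = divpow d (swap_mat M) n"
proof -
  have "swap_mat (mpow d M n) = mpow d (swap_mat M) n"
    by (induct n) (simp_all add: swap_mat_mmul)
  then show ?thesis
    by (simp add: divpow_def swap_mat_msmult)
qed

lemma swap_mat_mbinom: "swap_mat (mbinom d M n) = mbinom d (swap_mat M) n"
proof -
  have "swap_mat (mfall d M n) = mfall d (swap_mat M) n"
    by (induct n) (simp_all add: swap_mat_mmul swap_mat_madd swap_mat_mneg swap_mat_msmult)
  then show ?thesis
    by (simp add: mbinom_def swap_mat_msmult)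
qed

lemma swap_mat_rho: "swap_mat (rho d x) = rho d (\<lambda>a b. x (flip_letter a) (flip_letter b))"
proof (intro ext)
  fix i j
  have flip_eq: "flip_letter a = flip_letter b \<longleftrightarrow> a = b" for a b
    by (metis flip_letter_flip_letter)
  show "swap_mat (rho d x) i j = rho d (\<lambda>a b. x (flip_letter a) (flip_letter b)) i j"
  proof (cases "i \<in> Idx d \<and> j \<in> Idx d")
    case True
    then have "length i = d" "length j = d"
      by (simp_all add: Idx_def)
    then show ?thesis
      using True by (auto simp: swap_mat_def rho_def flip_eq intro!: sum.cong)
  qed (auto simp: swap_mat_def rho_def)
qed

lemma swap_mat_Eop [simp]: "swap_mat (Eop d) = Fop d"
  and swap_mat_H2op [simp]: "swap_mat (H2op d) = H1op d"
proof -
  have "(\<lambda>a b. matunit 1 2 (flip_letter a) (flip_letter b)) = matunit 2 1"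
    "(\<lambda>a b. matunit 2 2 (flip_letter a) (flip_letter b)) = matunit 1 1"
    by (auto simp: matunit_def flip_letter_def fun_eq_iff)
  then show "swap_mat (Eop d) = Fop d" "swap_mat (H2op d) = H1op d"
    by (simp_all add: Eop_def Fop_def H1op_def H2op_def swap_mat_rho)
qed

lemma swap_mat_Fop [simp]: "swap_mat (Fop d) = Eop d"
  using swap_mat_Eop[of d] by (metis swap_mat_swap_mat)

lemma swap_mat_placeperm:
  assumes "\<sigma> permutes {..<d}"
  shows "swap_mat (placeperm d \<sigma>) = placeperm d \<sigma>"
proof (intro ext)
  fix i j
  show "swap_mat (placeperm d \<sigma>) i j = placeperm d \<sigma> i j"
  proof (cases "j \<in> Idx d")
    case True
    then have "map (\<lambda>k. map flip_letter j ! \<sigma> k) [0..<d] = map flip_letter (map (\<lambda>k. j ! \<sigma> k) [0..<d])"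
      using permutes_in_image[OF assms] by (auto simp: Idx_def)
    then show ?thesis
      by (simp only: swap_mat_def placeperm_def map_flip_letter_in_Idx map_flip_letter_eq_iff)
  qed (simp add: swap_mat_def placeperm_def)
qed

lemma card_intermediate_sets:
  assumes "finite J"
  shows "card {M. I \<subseteq> M \<and> M \<subseteq> J \<and> card (M - I) = a \<and> card (J - M) = c}
    = (if I \<subseteq> J \<and> card (J - I) = a + c then (a + c) choose a else 0)"
proof (cases "I \<subseteq> J \<and> card (J - I) = a + c")
  case True
  have "{M. I \<subseteq> M \<and> M \<subseteq> J \<and> card (M - I) = a \<and> card (J - M) = c}
      = (\<lambda>T. I \<union> T) ` {T. T \<subseteq> J - I \<and> card T = a}"
  proof (intro set_eqI iffI)
    fix M assume "M \<in> {M. I \<subseteq> M \<and> M \<subseteq> J \<and> card (M - I) = a \<and> card (J - M) = c}"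
    then show "M \<in> (\<lambda>T. I \<union> T) ` {T. T \<subseteq> J - I \<and> card T = a}"
      by (intro image_eqI[of _ _ "M - I"]) auto
  next
    fix M assume "M \<in> (\<lambda>T. I \<union> T) ` {T. T \<subseteq> J - I \<and> card T = a}"
    then obtain T where T: "T \<subseteq> J - I" "card T = a" "M = I \<union> T"
      by auto
    then have "M - I = T" "J - M = (J - I) - T"
      by auto
    moreover have "card ((J - I) - T) = c"
      using T True assms by (simp add: card_Diff_subset finite_subset)
    ultimately show "M \<in> {M. I \<subseteq> M \<and> M \<subseteq> J \<and> card (M - I) = a \<and> card (J - M) = c}"
      using T True by auto
  qed
  moreover have "inj_on (\<lambda>T. I \<union> T) {T. T \<subseteq> J - I \<and> card T = a}"
    by (rule inj_onI) blast
  ultimately show ?thesis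
    using True assms by (simp add: card_image n_subsets)
next
  case False
  have "card (J - I) = c + a" if "I \<subseteq> M" "M \<subseteq> J" "card (M - I) = a" "card (J - M) = c" for M
  proof -
    have "J - I = (J - M) \<union> (M - I)" "(J - M) \<inter> (M - I) = {}"
      using that by blast+
    then show ?thesis
      using that assms by (simp add: card_Un_disjoint finite_subset)
  qed
  then have empty: "{M. I \<subseteq> M \<and> M \<subseteq> J \<and> card (M - I) = a \<and> card (J - M) = c} = {}"
    using False by fastforce
  show ?thesis
    unfolding empty using False by (simp add: binomial_eq_0)
qed

lemma sum_extends_by_mult:
  assumes "finite U" "I \<subseteq> U" "J \<subseteq> U"
  shows "(\<Sum>M\<in>Pow U. extends_by a I M * extends_by c M J) = of_nat ((a + c) choose a) * extends_by (a + c) I J"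
proof -
  have "(\<Sum>M\<in>Pow U. extends_by a I M * extends_by c M J)
      = (\<Sum>M\<in>Pow U. if I \<subseteq> M \<and> M \<subseteq> J \<and> card (M - I) = a \<and> card (J - M) = c then 1 else 0)"
    by (intro sum.cong) (auto simp: extends_by_def)
  also have "\<dots> = of_nat (card {M\<in>Pow U. I \<subseteq> M \<and> M \<subseteq> J \<and> card (M - I) = a \<and> card (J - M) = c})"
    by (rule sum_boole_card) (simp add: assms)
  also have "{M\<in>Pow U. I \<subseteq> M \<and> M \<subseteq> J \<and> card (M - I) = a \<and> card (J - M) = c}
      = {M. I \<subseteq> M \<and> M \<subseteq> J \<and> card (M - I) = a \<and> card (J - M) = c}"
    using assms by auto
  finally show ?thesis
    using assms by (simp add: card_intermediate_sets finite_subset extends_by_def)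
qed

lemma divpow_Eop_word_of:
  assumes "I \<subseteq> {..<d}" "J \<subseteq> {..<d}"
  shows "divpow d (Eop d) n (word_of d I) (word_of d J) = extends_by n I J"
proof -
  have "mpow d (Eop d) n (word_of d I) (word_of d J) = fact n * extends_by n I J"
    using assms
  proof (induct n arbitrary: I)
    case 0
    then show ?case
      by (auto simp: mone_def extends_by_def word_of_eq_iff finite_subset)
  next
    case (Suc n)
    have "mpow d (Eop d) (Suc n) (word_of d I) (word_of d J)
        = fact n * (\<Sum>M\<in>Pow {..<d}. extends_by 1 I M * extends_by n M J)"
      using Suc by (simp add: mmul_eq_sum_Pow Eop_word_of sum_distrib_left mult_ac)
    then show ?case
      using Suc.prems by (simp add: sum_extends_by_mult)
  qed
  then show ?thesis
    by (simp add: divpow_def msmult_def)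
qed

lemma extends_by_compl:
  "I \<subseteq> U \<Longrightarrow> J \<subseteq> U \<Longrightarrow> extends_by n (U - I) (U - J) = extends_by n J I"
proof -
  assume "I \<subseteq> U" "J \<subseteq> U"
  then have "U - I \<subseteq> U - J \<longleftrightarrow> J \<subseteq> I" "(U - J) - (U - I) = I - J"
    by blast+
  then show ?thesis
    by (simp add: extends_by_def)
qed

lemma divpow_Fop_word_of:
  assumes "I \<subseteq> {..<d}" "J \<subseteq> {..<d}"
  shows "divpow d (Fop d) n (word_of d I) (word_of d J) = extends_by n J I"
proof -
  have "divpow d (Fop d) n = swap_mat (divpow d (Eop d) n)"
    by (simp add: swap_mat_divpow)
  then show ?thesis
    using assms by (simp add: swap_mat_word_of divpow_Eop_word_of extends_by_compl)
qed

lemma card_Un_Diff_Int_Diff: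
  assumes "finite A" "finite B"
  shows "card (A \<union> B) = card (A - B) + card (A \<inter> B) + card (B - A)"
proof -
  have "A \<union> B = ((A - B) \<union> (A \<inter> B)) \<union> (B - A)"
    by blast
  also have "card \<dots> = card ((A - B) \<union> (A \<inter> B)) + card (B - A)"
    using assms by (intro card_Un_disjoint) auto
  also have "card ((A - B) \<union> (A \<inter> B)) = card (A - B) + card (A \<inter> B)"
    using assms by (intro card_Un_disjoint) auto
  finally show ?thesis .
qed

definition overlap :: "'a set \<Rightarrow> 'a set \<Rightarrow> nat \<times> nat \<times> nat" where
  "overlap I J = (card (I - J), card (I \<inter> J), card (J - I))"

lemma sum_subsets_card_Diff:
  assumes "finite K"
  shows "(\<Sum>M | M \<subseteq> K \<and> card (K - M) = t. h (card M)) = of_nat (card K choose t) * h (card K - t)"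
proof (cases "t \<le> card K")
  case True
  have "card (K - M) = card K - card M" "card M \<le> card K" if "M \<subseteq> K" for M
    using that assms by (simp_all add: card_Diff_subset card_mono finite_subset)
  then have "{M. M \<subseteq> K \<and> card (K - M) = t} = {M. M \<subseteq> K \<and> card M = card K - t}"
    using True by fastforce
  moreover have "card {M. M \<subseteq> K \<and> card M = card K - t} = card K choose t"
    using assms True by (simp add: n_subsets binomial_symmetric[symmetric])
  ultimately show ?thesis
    by simp
next
  case False
  have "card (K - M) \<le> card K" for M
    by (rule card_mono[OF assms Diff_subset])
  with False have empty: "{M. M \<subseteq> K \<and> card (K - M) = t} = {}"
    by (metis (mono_tags, lifting) empty_Collect_eq)
  show ?thesis
    unfolding empty using False by (simp add: binomial_eq_0)
qed

lemma sum_extends_by_diag: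
  assumes "finite U" "I \<subseteq> U" "J \<subseteq> U" and ov: "overlap I J = (a', b', c')"
  shows "(\<Sum>M\<in>Pow U. extends_by a M I * (h (card M) * extends_by c M J))
    = (if a' \<le> a \<and> c' \<le> c \<and> a - a' = c - c' then of_nat (b' choose (a - a')) * h (b' - (a - a')) else 0)"
proof -
  define K where "K = I \<inter> J"
  have fin: "finite I" "finite J" "finite K"
    using assms by (auto simp: K_def finite_subset)
  have card_I: "card (I - M) = a' + card (K - M)" and card_J: "card (J - M) = c' + card (K - M)"
    if "M \<subseteq> K" for M
  proof -
    have "I - M = (I - J) \<union> (K - M)" "J - M = (J - I) \<union> (K - M)"
      "(I - J) \<inter> (K - M) = {}" "(J - I) \<inter> (K - M) = {}"
      using that by (auto simp: K_def)
    then show "card (I - M) = a' + card (K - M)" "card (J - M) = c' + card (K - M)"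
      using fin ov by (simp_all add: card_Un_disjoint overlap_def)
  qed
  let ?P = "\<lambda>M. M \<subseteq> K \<and> a' + card (K - M) = a \<and> c' + card (K - M) = c"
  have "(\<Sum>M\<in>Pow U. extends_by a M I * (h (card M) * extends_by c M J))
      = (\<Sum>M\<in>Pow U. if ?P M then h (card M) else 0)"
    by (intro sum.cong) (auto simp: extends_by_def K_def card_I card_J)
  also have "\<dots> = (\<Sum>M | ?P M. h (card M))"
    using assms by (simp add: sum.inter_filter[symmetric] K_def) (metis order_trans)
  also have "\<dots> = (if a' \<le> a \<and> c' \<le> c \<and> a - a' = c - c' then of_nat (b' choose (a - a')) * h (b' - (a - a')) else 0)"
  proof (cases "a' \<le> a \<and> c' \<le> c \<and> a - a' = c - c'")
    case True
    then have "{M. ?P M} = {M. M \<subseteq> K \<and> card (K - M) = a - a'}"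
      by auto
    moreover have "card K = b'"
      using ov by (simp add: overlap_def K_def)
    ultimately show ?thesis
      using True fin by (simp add: sum_subsets_card_Diff)
  next
    case False
    then have empty: "{M. ?P M} = {}"
      by auto
    show ?thesis
      unfolding empty using False by auto
  qed
  finally show ?thesis .
qed

lemma sandwich_word_of:
  assumes "I \<subseteq> {..<d}" "J \<subseteq> {..<d}" "overlap I J = (a', b', c')"
  shows "mmul d (divpow d (Fop d) a) (mmul d (diag_mat d h) (divpow d (Eop d) c)) (word_of d I) (word_of d J)
    = (if a' \<le> a \<and> c' \<le> c \<and> a - a' = c - c' then of_nat (b' choose (a - a')) * h (b' - (a - a')) else 0)"
proof -
  have "mmul d (divpow d (Fop d) a) (mmul d (diag_mat d h) (divpow d (Eop d) c)) (word_of d I) (word_of d J)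
      = (\<Sum>M\<in>Pow {..<d}. extends_by a M I * (h (card M) * extends_by c M J))"
    unfolding mmul_eq_sum_Pow[of d "divpow d (Fop d) a"]
    by (intro sum.cong) (use assms in \<open>auto simp: divpow_Fop_word_of divpow_Eop_word_of mmul_diag_mat_left\<close>)
  then show ?thesis
    using assms by (simp add: sum_extends_by_diag)
qed

section \<open>Invariance under place permutations\<close>

lemma permutes_image_eq_iff:
  assumes "\<sigma> permutes U" "J \<subseteq> U" "K \<subseteq> U"
  shows "\<sigma> ` J = K \<longleftrightarrow> (\<forall>k\<in>U. k \<in> J \<longleftrightarrow> \<sigma> k \<in> K)"
proof
  assume "\<forall>k\<in>U. k \<in> J \<longleftrightarrow> \<sigma> k \<in> K"
  moreover have "\<exists>k\<in>U. \<sigma> k = y" if "y \<in> U" for y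
    using that permutes_image[OF assms(1)] by (metis image_iff)
  ultimately show "\<sigma> ` J = K"
    using assms by blast
next
  assume "\<sigma> ` J = K"
  then show "\<forall>k\<in>U. k \<in> J \<longleftrightarrow> \<sigma> k \<in> K"
    using inj_image_mem_iff[OF permutes_inj[OF assms(1)]] by blast
qed

lemma placeperm_word_of:
  assumes "\<sigma> permutes {..<d}" "J \<subseteq> {..<d}" "K \<subseteq> {..<d}"
  shows "placeperm d \<sigma> (word_of d J) (word_of d K) = (if \<sigma> ` J = K then 1 else 0)"
proof -
  have "word_of d J = map (\<lambda>k. word_of d K ! \<sigma> k) [0..<d] \<longleftrightarrow> (\<forall>k<d. k \<in> J \<longleftrightarrow> \<sigma> k \<in> K)"
    using permutes_in_image[OF assms(1)] by (auto simp: list_eq_iff_nth_eq split: if_splits)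
  then show ?thesis
    using assms by (simp add: placeperm_def permutes_image_eq_iff)
qed

lemma mmul_placeperm_left:
  assumes "\<sigma> permutes {..<d}" "I \<subseteq> {..<d}"
  shows "mmul d (placeperm d \<sigma>) M (word_of d I) k = M (word_of d (\<sigma> ` I)) k"
proof -
  have "mmul d (placeperm d \<sigma>) M (word_of d I) k = (\<Sum>J\<in>Pow {..<d}. if \<sigma> ` I = J then M (word_of d J) k else 0)"
    unfolding mmul_eq_sum_Pow by (intro sum.cong) (simp_all add: placeperm_word_of assms)
  also have "\<dots> = M (word_of d (\<sigma> ` I)) k"
    using image_mono[OF assms(2), of \<sigma>] permutes_image[OF assms(1)] by simp
  finally show ?thesis .
qed

lemma mmul_placeperm_right:
  assumes "\<sigma> permutes {..<d}" "K \<subseteq> {..<d}"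
  shows "mmul d M (placeperm d \<sigma>) i (word_of d (\<sigma> ` K)) = M i (word_of d K)"
proof -
  have "\<sigma> ` K \<subseteq> {..<d}"
    using assms permutes_image by blast
  then have "mmul d M (placeperm d \<sigma>) i (word_of d (\<sigma> ` K)) = (\<Sum>J\<in>Pow {..<d}. if J = K then M i (word_of d J) else 0)"
    unfolding mmul_eq_sum_Pow using inj_image_eq_iff[OF permutes_inj[OF assms(1)]]
    by (intro sum.cong) (simp_all add: placeperm_word_of assms)
  also have "\<dots> = M i (word_of d K)"
    using assms by simp
  finally show ?thesis .
qed

lemma SZ_invariant:
  assumes "M \<in> SZ d" "\<sigma> permutes {..<d}" "I \<subseteq> {..<d}" "J \<subseteq> {..<d}"
  shows "M (word_of d (\<sigma> ` I)) (word_of d (\<sigma> ` J)) = M (word_of d I) (word_of d J)"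
proof -
  have "M (word_of d (\<sigma> ` I)) (word_of d (\<sigma> ` J)) = mmul d (placeperm d \<sigma>) M (word_of d I) (word_of d (\<sigma> ` J))"
    using assms by (simp add: mmul_placeperm_left)
  also have "\<dots> = mmul d M (placeperm d \<sigma>) (word_of d I) (word_of d (\<sigma> ` J))"
    using assms by (simp add: SZ_def)
  also have "\<dots> = M (word_of d I) (word_of d J)"
    using assms by (simp add: mmul_placeperm_right)
  finally show ?thesis .
qed

lemma SZ_intro_invariant:
  assumes "is_mat d M"
    and "\<And>I J. I \<subseteq> {..<d} \<Longrightarrow> J \<subseteq> {..<d} \<Longrightarrow> M (word_of d I) (word_of d J) \<in> \<int>"
    and "\<And>\<sigma> I J. \<sigma> permutes {..<d} \<Longrightarrow> I \<subseteq> {..<d} \<Longrightarrow> J \<subseteq> {..<d} \<Longrightarrow>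
               M (word_of d (\<sigma> ` I)) (word_of d (\<sigma> ` J)) = M (word_of d I) (word_of d J)"
  shows "M \<in> SZ d"
proof -
  have "M i j \<in> \<int>" for i j
  proof (cases "i \<in> Idx d \<and> j \<in> Idx d")
    case True
    then show ?thesis
      using assms(2) by (elim conjE obtain_word_of) simp
  qed (use assms(1) in \<open>simp add: is_mat_def\<close>)
  moreover have "mmul d M (placeperm d \<sigma>) = mmul d (placeperm d \<sigma>) M" if \<sigma>: "\<sigma> permutes {..<d}" for \<sigma>
  proof (rule mat_eqI[of d])
    fix I K assume I: "I \<subseteq> {..<d}" and K: "K \<subseteq> {..<d}"
    define K' where "K' = inv \<sigma> ` K"
    have K': "K' \<subseteq> {..<d}" "K = \<sigma> ` K'"
      using K permutes_image[OF permutes_inv[OF \<sigma>]] permutes_inverses(1)[OF \<sigma>]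
      by (auto simp: K'_def image_image)
    show "mmul d M (placeperm d \<sigma>) (word_of d I) (word_of d K) = mmul d (placeperm d \<sigma>) M (word_of d I) (word_of d K)"
      using assms(3)[OF \<sigma> I K'(1)] by (simp add: K' mmul_placeperm_left mmul_placeperm_right \<sigma> I)
  qed (use assms in auto)
  ultimately show ?thesis
    using assms by (simp add: SZ_def)
qed

lemma overlap_image:
  assumes "inj \<sigma>"
  shows "overlap (\<sigma> ` I) (\<sigma> ` J) = overlap I J"
proof -
  have "\<sigma> ` I - \<sigma> ` J = \<sigma> ` (I - J)" "\<sigma> ` I \<inter> \<sigma> ` J = \<sigma> ` (I \<inter> J)" "\<sigma> ` J - \<sigma> ` I = \<sigma> ` (J - I)"
    using assms by (simp_all add: image_set_diff image_Int)
  then show ?thesis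
    using assms by (simp add: overlap_def card_image inj_on_subset)
qed

lemma SZ_intro_overlap:
  assumes "is_mat d M"
    and "\<And>I J. I \<subseteq> {..<d} \<Longrightarrow> J \<subseteq> {..<d} \<Longrightarrow> M (word_of d I) (word_of d J) = of_int (f (overlap I J))"
  shows "M \<in> SZ d"
proof (rule SZ_intro_invariant[OF assms(1)])
  fix \<sigma> I J assume "\<sigma> permutes {..<d}" "I \<subseteq> {..<d}" "J \<subseteq> {..<d}"
  moreover then have "\<sigma> ` I \<subseteq> {..<d}" "\<sigma> ` J \<subseteq> {..<d}"
    using permutes_image by blast+
  ultimately show "M (word_of d (\<sigma> ` I)) (word_of d (\<sigma> ` J)) = M (word_of d I) (word_of d J)"
    by (simp add: assms(2) overlap_image permutes_inj)
qed (simp add: assms(2))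

lemma count_membership_pattern:
  fixes d :: nat
  assumes "A \<subseteq> {..<d}" "B \<subseteq> {..<d}" "overlap A B = (a, b, c)"
  shows "count (mset (map (\<lambda>k. (k \<in> A, k \<in> B)) [0..<d])) (x, y)
    = (if x then if y then b else a else if y then c else d - (a + b + c))"
proof -
  have "count (mset (map (\<lambda>k. (k \<in> A, k \<in> B)) [0..<d])) (x, y) = card {k. k < d \<and> (x, y) = (k \<in> A, k \<in> B)}"
    unfolding count_mset count_list_eq_length_filter length_filter_conv_card
    by (intro arg_cong[where f = card]) auto
  also have "{k. k < d \<and> (x, y) = (k \<in> A, k \<in> B)} = (if x then A else {..<d} - A) \<inter> (if y then B else {..<d} - B)"
    using assms by (auto split: if_splits)
  also have "card \<dots> = (if x then if y then b else a else if y then c else d - (a + b + c))"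
  proof -
    have "finite A" "finite B"
      using assms finite_subset by blast+
    moreover have "({..<d} - A) \<inter> ({..<d} - B) = {..<d} - (A \<union> B)" "A \<inter> ({..<d} - B) = A - B"
      "({..<d} - A) \<inter> B = B - A"
      using assms by blast+
    ultimately show ?thesis
      using assms card_Un_Diff_Int_Diff[of A B] by (simp add: overlap_def card_Diff_subset)
  qed
  finally show ?thesis .
qed

text \<open>The permutation is read off from the lists of membership patterns, which have the same
  multiset of letters.\<close>

lemma obtain_permutes_overlap:
  fixes d :: nat
  assumes I: "I \<subseteq> {..<d}" and J: "J \<subseteq> {..<d}" and I': "I' \<subseteq> {..<d}" and J': "J' \<subseteq> {..<d}"
    and eq: "overlap I J = overlap I' J'"
  obtains \<sigma> where "\<sigma> permutes {..<d}" "\<sigma> ` I = I'" "\<sigma> ` J = J'"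
proof -
  define pattern where "pattern A B = map (\<lambda>k. (k \<in> A, k \<in> B)) [0..<d]" for A B :: "nat set"
  obtain a b c where abc: "overlap I J = (a, b, c)" "overlap I' J' = (a, b, c)"
    using eq by (metis prod_cases3)
  have "mset (pattern I J) = mset (pattern I' J')"
  proof (rule multiset_eqI)
    fix xy :: "bool \<times> bool"
    show "count (mset (pattern I J)) xy = count (mset (pattern I' J')) xy"
      using count_membership_pattern[OF I J abc(1)] count_membership_pattern[OF I' J' abc(2)]
      by (cases xy) (simp add: pattern_def)
  qed
  then obtain \<sigma> where \<sigma>: "\<sigma> permutes {..<d}" "permute_list \<sigma> (pattern I' J') = pattern I J"
    by (rule mset_eq_permutation) (simp add: pattern_def)
  have "k \<in> I \<longleftrightarrow> \<sigma> k \<in> I'" "k \<in> J \<longleftrightarrow> \<sigma> k \<in> J'" if "k < d" for k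
    using that permutes_in_image[OF \<sigma>(1)] arg_cong[OF \<sigma>(2), of "\<lambda>xs. xs ! k"]
    by (simp_all add: permute_list_def pattern_def)
  then show ?thesis
    using that \<sigma>(1) I J I' J' by (simp add: permutes_image_eq_iff)
qed

lemma SZ_entry_overlap_eq:
  assumes "M \<in> SZ d" "I \<subseteq> {..<d}" "J \<subseteq> {..<d}" "I' \<subseteq> {..<d}" "J' \<subseteq> {..<d}"
    and "overlap I J = overlap I' J'"
  shows "M (word_of d I) (word_of d J) = M (word_of d I') (word_of d J')"
proof -
  obtain \<sigma> where \<sigma>: "\<sigma> permutes {..<d}" "\<sigma> ` I = I'" "\<sigma> ` J = J'"
    using obtain_permutes_overlap[OF assms(2-6)] .
  then show ?thesis
    using SZ_invariant[OF assms(1) \<sigma>(1) assms(2,3)] by simp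
qed

lemma overlap_in_triples:
  assumes "I \<subseteq> {..<d}" "J \<subseteq> {..<d}"
  shows "overlap I J \<in> triples d"
proof -
  have "card (I \<union> J) \<le> d"
    using assms card_mono[of "{..<d}" "I \<union> J"] by simp
  moreover have "finite I" "finite J"
    using assms finite_subset by blast+
  ultimately show ?thesis
    using card_Un_Diff_Int_Diff[of I J] by (simp add: overlap_def triples_def)
qed

lemma obtain_overlap:
  assumes "s \<in> triples d"
  obtains I J where "I \<subseteq> {..<d}" "J \<subseteq> {..<d}" "overlap I J = s"
proof -
  obtain a b c where s: "s = (a, b, c)" "a + b + c \<le> d"
    using assms by (auto simp: triples_def)
  have "{..<a + b} - {a..<a + b + c} = {..<a}" "{..<a + b} \<inter> {a..<a + b + c} = {a..<a + b}"
    "{a..<a + b + c} - {..<a + b} = {a + b..<a + b + c}"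
    by auto
  then have "overlap {..<a + b} {a..<a + b + c} = s"
    by (simp add: overlap_def s)
  moreover have "{..<a + b} \<subseteq> {..<d}" "{a..<a + b + c} \<subseteq> {..<d}"
    using s by auto
  ultimately show ?thesis
    using that by blast
qed

lemma SZ_obtain_overlap_coeffs:
  assumes "M \<in> SZ d"
  obtains g :: "nat \<times> nat \<times> nat \<Rightarrow> int"
    where "\<And>I J. I \<subseteq> {..<d} \<Longrightarrow> J \<subseteq> {..<d} \<Longrightarrow> M (word_of d I) (word_of d J) = of_int (g (overlap I J))"
proof -
  let ?P = "\<lambda>s v. \<forall>I J. I \<subseteq> {..<d} \<longrightarrow> J \<subseteq> {..<d} \<longrightarrow> overlap I J = s \<longrightarrow>
    M (word_of d I) (word_of d J) = of_int v"
  have "\<exists>v::int. ?P s v" for s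
  proof (cases "s \<in> triples d")
    case True
    then obtain I0 J0 where I0J0: "I0 \<subseteq> {..<d}" "J0 \<subseteq> {..<d}" "overlap I0 J0 = s"
      by (rule obtain_overlap)
    have "M (word_of d I0) (word_of d J0) \<in> \<int>"
      using assms by (simp add: SZ_def)
    then obtain v where v: "M (word_of d I0) (word_of d J0) = of_int v"
      by (rule Ints_cases)
    have "?P s v"
    proof (intro allI impI)
      fix I J assume "I \<subseteq> {..<d}" "J \<subseteq> {..<d}" "overlap I J = s"
      then show "M (word_of d I) (word_of d J) = of_int v"
        using SZ_entry_overlap_eq[OF assms _ _ I0J0(1,2)] I0J0(3) v by simp
    qed
    then show ?thesis ..
  next
    case False
    have "?P s 0"
    proof (intro allI impI)
      fix I J assume "I \<subseteq> {..<d}" "J \<subseteq> {..<d}" "overlap I J = s"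
      with False show "M (word_of d I) (word_of d J) = of_int 0"
        using overlap_in_triples by metis
    qed
    then show ?thesis ..
  qed
  then obtain g where g: "\<And>s. ?P s (g s)"
    by metis
  show thesis
  proof (rule that)
    fix I J assume "I \<subseteq> {..<d}" "J \<subseteq> {..<d}"
    then show "M (word_of d I) (word_of d J) = of_int (g (overlap I J))"
      using g[of "overlap I J"] by simp
  qed
qed

section \<open>Unitriangular systems\<close>

lemma unitriangular_solution_eliminate:
  fixes \<beta> :: "'a \<Rightarrow> 'a \<Rightarrow> 'r::comm_ring_1"
  assumes "finite T" "x \<in> T" "\<beta> x x = 1" "\<And>t. t \<in> T - {x} \<Longrightarrow> \<beta> t x = 0"
  shows "(\<forall>t. t \<notin> T \<longrightarrow> c t = 0) \<and> (\<forall>s\<in>T. g s = (\<Sum>t\<in>T. c t * \<beta> t s)) \<longleftrightarrow>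
    c x = g x \<and> (\<forall>t. t \<notin> T - {x} \<longrightarrow> (c(x := 0)) t = 0) \<and>
      (\<forall>s\<in>T - {x}. g s - g x * \<beta> x s = (\<Sum>t\<in>T - {x}. (c(x := 0)) t * \<beta> t s))"
proof -
  have upd: "(\<Sum>t\<in>T - {x}. (c(x := 0)) t * \<beta> t s) = (\<Sum>t\<in>T - {x}. c t * \<beta> t s)" for s
    by (intro sum.cong) auto
  have sum_T: "(\<Sum>t\<in>T. c t * \<beta> t s) = (\<Sum>t\<in>T - {x}. (c(x := 0)) t * \<beta> t s) + c x * \<beta> x s" for s
    unfolding upd using assms(1,2) by (simp add: sum.remove add.commute)
  have "(\<Sum>t\<in>T - {x}. (c(x := 0)) t * \<beta> t x) = 0"
    using assms(4) by simp
  then have sum_T_x: "(\<Sum>t\<in>T. c t * \<beta> t x) = c x"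
    using assms(3) by (simp add: sum_T)
  have ball_T: "(\<forall>s\<in>T. P s) \<longleftrightarrow> P x \<and> (\<forall>s\<in>T - {x}. P s)" for P
    using assms(2) by blast
  have supp: "(\<forall>t. t \<notin> T \<longrightarrow> c t = 0) \<longleftrightarrow> (\<forall>t. t \<notin> T - {x} \<longrightarrow> (c(x := 0)) t = 0)"
    using assms(2) by auto
  show ?thesis
    unfolding supp ball_T[where P = "\<lambda>s. g s = (\<Sum>t\<in>T. c t * \<beta> t s)"] sum_T_x
    by (auto simp: sum_T diff_eq_eq)
qed

lemma unitriangular_system_unique_solution:
  fixes \<beta> :: "'a \<Rightarrow> 'a \<Rightarrow> 'r::comm_ring_1" and rk :: "'a \<Rightarrow> 'b::linorder"
  assumes "finite T"
    and "\<And>t. t \<in> T \<Longrightarrow> \<beta> t t = 1"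
    and "\<And>s t. s \<in> T \<Longrightarrow> t \<in> T \<Longrightarrow> \<beta> t s \<noteq> 0 \<Longrightarrow> s \<noteq> t \<Longrightarrow> rk s < rk t"
  shows "\<exists>!c. (\<forall>t. t \<notin> T \<longrightarrow> c t = 0) \<and> (\<forall>s\<in>T. g s = (\<Sum>t\<in>T. c t * \<beta> t s))"
  using assms
proof (induction T arbitrary: g rule: finite_remove_induct)
  case empty
  show ?case
    by (rule ex1I[of _ "\<lambda>_. 0"]) auto
next
  case (remove T)
  let ?sol = "\<lambda>T g c. (\<forall>t. t \<notin> T \<longrightarrow> c t = 0) \<and> (\<forall>s\<in>T. g s = (\<Sum>t\<in>T. c t * \<beta> t s))"
  have "Max (rk ` T) \<in> rk ` T"
    using remove.hyps by simp
  then obtain x where x: "x \<in> T" "Max (rk ` T) = rk x"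
    by blast
  have col: "\<beta> t x = 0" if "t \<in> T - {x}" for t
  proof (rule ccontr)
    assume "\<beta> t x \<noteq> 0"
    then have "rk x < rk t"
      using remove.prems(2)[of x t] x(1) that by auto
    moreover have "rk t \<le> rk x"
      using Max_ge[of "rk ` T" "rk t"] remove.hyps(1) x(2) that by simp
    ultimately show False
      by simp
  qed
  have eliminate: "?sol T g c \<longleftrightarrow> c x = g x \<and> ?sol (T - {x}) (\<lambda>s. g s - g x * \<beta> x s) (c(x := 0))" for c
    by (rule unitriangular_solution_eliminate[OF remove.hyps(1) x(1)]) (use remove.prems(1)[OF x(1)] col in auto)
  have "\<exists>!c. ?sol (T - {x}) (\<lambda>s. g s - g x * \<beta> x s) c"
    by (rule remove.IH[OF x(1)]) (use remove.prems in auto)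
  then obtain c' where c': "?sol (T - {x}) (\<lambda>s. g s - g x * \<beta> x s) c'"
    and c'_unique: "\<forall>c. ?sol (T - {x}) (\<lambda>s. g s - g x * \<beta> x s) c \<longrightarrow> c = c'"
    by (rule ex1E)
  have "c' x = 0"
    using c' by simp
  then have upd: "(c'(x := g x))(x := 0) = c'"
    by (simp add: fun_eq_iff)
  have "?sol T g (c'(x := g x))"
    unfolding eliminate upd using c' by simp
  moreover have "c = c'(x := g x)" if "?sol T g c" for c
  proof -
    have "c(x := 0) = c'" "c x = g x"
      using c'_unique that unfolding eliminate by blast+
    then show ?thesis
      by (metis fun_upd_triv fun_upd_upd)
  qed
  ultimately show ?case
    by blast
qed

section \<open>Two integral bases\<close>

lemma finite_triples: "finite (triples d)"
proof -
  have "triples d \<subseteq> {..d} \<times> {..d} \<times> {..d}"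
    by (auto simp: triples_def)
  then show ?thesis
    by (rule finite_subset) simp
qed

lemma mat_eq_combination_iff_overlap:
  fixes g :: "nat \<times> nat \<times> nat \<Rightarrow> int" and \<beta> :: "'t \<Rightarrow> nat \<times> nat \<times> nat \<Rightarrow> int"
    and c :: "'t \<Rightarrow> int"
  assumes "is_mat d M" "\<And>t. is_mat d (B t)"
    and M_entries: "\<And>I J. I \<subseteq> {..<d} \<Longrightarrow> J \<subseteq> {..<d} \<Longrightarrow>
      M (word_of d I) (word_of d J) = of_int (g (overlap I J))"
    and B_entries: "\<And>t I J. I \<subseteq> {..<d} \<Longrightarrow> J \<subseteq> {..<d} \<Longrightarrow>
      B t (word_of d I) (word_of d J) = of_int (\<beta> t (overlap I J))"
  shows "M = (\<lambda>i j. \<Sum>t\<in>T. of_int (c t) * B t i j) \<longleftrightarrow> (\<forall>s\<in>triples d. g s = (\<Sum>t\<in>T. c t * \<beta> t s))"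
proof
  assume eq: "M = (\<lambda>i j. \<Sum>t\<in>T. of_int (c t) * B t i j)"
  show "\<forall>s\<in>triples d. g s = (\<Sum>t\<in>T. c t * \<beta> t s)"
  proof
    fix s assume "s \<in> triples d"
    then obtain I J where IJ: "I \<subseteq> {..<d}" "J \<subseteq> {..<d}" "overlap I J = s"
      by (rule obtain_overlap)
    have "of_int (g s) = M (word_of d I) (word_of d J)"
      using M_entries IJ by simp
    also have "\<dots> = of_int (\<Sum>t\<in>T. c t * \<beta> t s)"
      using IJ by (simp add: eq B_entries)
    finally show "g s = (\<Sum>t\<in>T. c t * \<beta> t s)"
      by (simp only: of_int_eq_iff)
  qed
next
  assume eq: "\<forall>s\<in>triples d. g s = (\<Sum>t\<in>T. c t * \<beta> t s)"
  show "M = (\<lambda>i j. \<Sum>t\<in>T. of_int (c t) * B t i j)"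
  proof (rule mat_eqI[of d])
    show "is_mat d (\<lambda>i j. \<Sum>t\<in>T. of_int (c t) * B t i j)"
      using assms(2) by (simp add: is_mat_def)
  next
    fix I J assume IJ: "I \<subseteq> {..<d}" "J \<subseteq> {..<d}"
    then show "M (word_of d I) (word_of d J) = (\<lambda>i j. \<Sum>t\<in>T. of_int (c t) * B t i j) (word_of d I) (word_of d J)"
      using eq overlap_in_triples[OF IJ] by (simp add: M_entries B_entries)
  qed (fact assms(1))
qed

lemma is_Z_basis_SZ_if_unitriangular:
  fixes B :: "nat \<times> nat \<times> nat \<Rightarrow> mat" and \<beta> :: "nat \<times> nat \<times> nat \<Rightarrow> nat \<times> nat \<times> nat \<Rightarrow> int"
    and rk :: "nat \<times> nat \<times> nat \<Rightarrow> 'b::linorder"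
  assumes B_mat: "\<And>t. is_mat d (B t)"
    and B_entries: "\<And>t I J. I \<subseteq> {..<d} \<Longrightarrow> J \<subseteq> {..<d} \<Longrightarrow>
      B t (word_of d I) (word_of d J) = of_int (\<beta> t (overlap I J))"
    and diag: "\<And>t. t \<in> triples d \<Longrightarrow> \<beta> t t = 1"
    and triangular: "\<And>s t. s \<in> triples d \<Longrightarrow> t \<in> triples d \<Longrightarrow> \<beta> t s \<noteq> 0 \<Longrightarrow> s \<noteq> t \<Longrightarrow> rk s < rk t"
  shows "is_Z_basis (SZ d) (triples d) B"
proof -
  have "\<exists>!c. (\<forall>t. t \<notin> triples d \<longrightarrow> c t = 0) \<and> M = (\<lambda>i j. \<Sum>t\<in>triples d. of_int (c t) * B t i j)"
    if M: "M \<in> SZ d" for M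
  proof -
    obtain g where g: "\<And>I J. I \<subseteq> {..<d} \<Longrightarrow> J \<subseteq> {..<d} \<Longrightarrow>
        M (word_of d I) (word_of d J) = of_int (g (overlap I J))"
      using SZ_obtain_overlap_coeffs[OF M] by blast
    have M_mat: "is_mat d M"
      using M by (simp add: SZ_def)
    have "\<exists>!c. (\<forall>t. t \<notin> triples d \<longrightarrow> c t = 0) \<and> (\<forall>s\<in>triples d. g s = (\<Sum>t\<in>triples d. c t * \<beta> t s))"
      using finite_triples diag triangular by (rule unitriangular_system_unique_solution)
    then show ?thesis
      by (simp add: mat_eq_combination_iff_overlap[OF M_mat B_mat g B_entries])
  qed
  moreover have "B t \<in> SZ d" for t
    by (rule SZ_intro_overlap[OF B_mat B_entries])
  ultimately show ?thesis
    unfolding is_Z_basis_def by blast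
qed

definition fhe :: "nat \<Rightarrow> nat \<times> nat \<times> nat \<Rightarrow> mat" where
  "fhe d = (\<lambda>(a, b, c). mmul d (divpow d (Fop d) a) (mmul d (mbinom d (H2op d) b) (divpow d (Eop d) c)))"

definition ehf :: "nat \<Rightarrow> nat \<times> nat \<times> nat \<Rightarrow> mat" where
  "ehf d = (\<lambda>(a, b, c). mmul d (divpow d (Eop d) a) (mmul d (mbinom d (H1op d) b) (divpow d (Fop d) c)))"

definition fhe_coeff :: "nat \<times> nat \<times> nat \<Rightarrow> nat \<times> nat \<times> nat \<Rightarrow> int" where
  "fhe_coeff = (\<lambda>(a, b, c) (a', b', c'). if a' \<le> a \<and> c' \<le> c \<and> a - a' = c - c'
     then int ((b' choose (a - a')) * ((b' - (a - a')) choose b)) else 0)"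

lemma mbinom_H2op: "mbinom d (H2op d) b = diag_mat d (\<lambda>x. of_nat (x choose b))"
  by (simp add: H2op_eq_diag_mat mbinom_diag_mat binomial_gbinomial)

lemma fhe_word_of:
  assumes "I \<subseteq> {..<d}" "J \<subseteq> {..<d}"
  shows "fhe d t (word_of d I) (word_of d J) = of_int (fhe_coeff t (overlap I J))"
proof -
  obtain a b c a' b' c' where "t = (a, b, c)" "overlap I J = (a', b', c')"
    by (metis prod_cases3)
  then show ?thesis
    using assms by (simp add: fhe_def mbinom_H2op sandwich_word_of fhe_coeff_def)
qed

lemma is_mat_fhe [simp]: "is_mat d (fhe d t)"
  by (simp add: fhe_def split: prod.splits)

text \<open>Triangularity: apart from overlap type $(a, b, c)$ itself, \<^term>\<open>fhe d (a, b, c)\<close> has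
  nonzero entries only at overlap types $(a', b', c')$ with $b' - a' > b - a$.\<close>

lemma is_Z_basis_fhe: "is_Z_basis (SZ d) (triples d) (fhe d)"
proof (rule is_Z_basis_SZ_if_unitriangular[where \<beta> = fhe_coeff and rk = "\<lambda>(a', b', c'). int a' - int b'"])
  show "fhe_coeff t t = 1" for t
    by (simp add: fhe_coeff_def split: prod.splits)
next
  fix s t assume nz: "fhe_coeff t s \<noteq> 0" and "s \<noteq> t"
  obtain a b c a' b' c' where t: "t = (a, b, c)" and s: "s = (a', b', c')"
    by (metis prod_cases3)
  have "a' \<le> a" "c' \<le> c" "a - a' = c - c'" "b' choose (a - a') \<noteq> 0" "(b' - (a - a')) choose b \<noteq> 0"
    using nz by (simp_all add: fhe_coeff_def t s split: if_splits)
  then have "a' \<le> a" "a - a' \<le> b'" "b \<le> b' - (a - a')" "a' = a \<Longrightarrow> b' \<noteq> b"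
    using \<open>s \<noteq> t\<close> by (auto simp: t s)
  then show "(\<lambda>(a', b', c'). int a' - int b') s < (\<lambda>(a', b', c'). int a' - int b') t"
    by (cases "a' = a") (auto simp: t s)
qed (simp_all add: fhe_word_of)

lemma SZ_swap_mat:
  assumes "M \<in> SZ d"
  shows "swap_mat M \<in> SZ d"
proof -
  have "mmul d (swap_mat M) (placeperm d \<sigma>) = mmul d (placeperm d \<sigma>) (swap_mat M)"
    if "\<sigma> permutes {..<d}" for \<sigma>
    using assms that swap_mat_mmul[of d M "placeperm d \<sigma>"] swap_mat_mmul[of d "placeperm d \<sigma>" M]
    by (simp add: SZ_def swap_mat_placeperm)
  moreover have "swap_mat M i j \<in> \<int>" for i j
    using assms by (simp add: SZ_def swap_mat_def)
  ultimately show ?thesis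
    using assms by (simp add: SZ_def)
qed

lemma is_Z_basis_swap_mat:
  assumes "is_Z_basis (SZ d) T B"
  shows "is_Z_basis (SZ d) T (\<lambda>t. swap_mat (B t))"
proof -
  have swap_eq_iff: "M = swap_mat X \<longleftrightarrow> swap_mat M = X" for M X
    by (metis swap_mat_swap_mat)
  have "M = (\<lambda>i j. \<Sum>t\<in>T. of_int (c t) * swap_mat (B t) i j) \<longleftrightarrow>
      swap_mat M = (\<lambda>i j. \<Sum>t\<in>T. of_int (c t) * B t i j)" for M and c :: "'a \<Rightarrow> int"
    using swap_eq_iff[of M "\<lambda>i j. \<Sum>t\<in>T. of_int (c t) * B t i j"] by (simp add: swap_mat_def)
  moreover have "swap_mat M \<in> SZ d \<longleftrightarrow> M \<in> SZ d" for M
    using SZ_swap_mat by (metis swap_mat_swap_mat)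
  ultimately show ?thesis
    using assms unfolding is_Z_basis_def by simp
qed

lemma swap_mat_fhe: "swap_mat (fhe d t) = ehf d t"
  by (simp add: fhe_def ehf_def swap_mat_mmul swap_mat_divpow swap_mat_mbinom split: prod.splits)

lemma is_Z_basis_ehf: "is_Z_basis (SZ d) (triples d) (ehf d)"
  using is_Z_basis_swap_mat[OF is_Z_basis_fhe, of d] by (simp add: swap_mat_fhe)

section \<open>The subring generated by the divided powers\<close>

lemma SZ_madd: "M \<in> SZ d \<Longrightarrow> N \<in> SZ d \<Longrightarrow> madd M N \<in> SZ d"
  and SZ_mneg: "M \<in> SZ d \<Longrightarrow> mneg M \<in> SZ d"
  by (auto simp: SZ_def madd_mmul_distrib mneg_mmul_distrib) (auto simp: madd_def mneg_def)

lemma SZ_mmul: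
  assumes "M \<in> SZ d" "N \<in> SZ d"
  shows "mmul d M N \<in> SZ d"
proof -
  have "mmul d (mmul d M N) (placeperm d \<sigma>) = mmul d (placeperm d \<sigma>) (mmul d M N)"
    if "\<sigma> permutes {..<d}" for \<sigma>
    using assms that by (simp add: SZ_def mmul_assoc) (simp add: mmul_assoc[symmetric])
  moreover have "mmul d M N i j \<in> \<int>" for i j
    using assms by (auto simp: SZ_def mmul_def intro!: Ints_mult)
  ultimately show ?thesis
    using assms by (simp add: SZ_def)
qed

lemma divpow_Eop_in_SZ: "divpow d (Eop d) m \<in> SZ d"
proof (rule SZ_intro_overlap)
  fix I J assume "I \<subseteq> {..<d}" "J \<subseteq> {..<d}"
  then show "divpow d (Eop d) m (word_of d I) (word_of d J)
      = of_int ((\<lambda>(a', b', c'). if a' = 0 \<and> c' = m then 1 else 0) (overlap I J))"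
    using finite_subset[of I "{..<d}"] by (simp add: divpow_Eop_word_of extends_by_def overlap_def)
qed simp

lemma mone_in_SZ: "mone d \<in> SZ d"
proof (rule SZ_intro_overlap)
  fix I J assume "I \<subseteq> {..<d}" "J \<subseteq> {..<d}"
  then show "mone d (word_of d I) (word_of d J)
      = of_int ((\<lambda>(a', b', c'). if a' = 0 \<and> c' = 0 then 1 else 0) (overlap I J))"
    using finite_subset[of I "{..<d}"] finite_subset[of J "{..<d}"]
    by (auto simp: mone_def word_of_eq_iff overlap_def)
qed simp

lemma divpow_ring_subset_SZ: "M \<in> divpow_ring d \<Longrightarrow> M \<in> SZ d"
proof (induction rule: divpow_ring.induct)
  case (gen_f m)
  have "divpow d (Fop d) m = swap_mat (divpow d (Eop d) m)"
    by (simp add: swap_mat_divpow)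
  then show ?case
    by (simp add: SZ_swap_mat divpow_Eop_in_SZ)
next
  case zero
  show ?case
    by (rule SZ_intro_overlap[where f = "\<lambda>_. 0"]) simp_all
qed (simp_all add: divpow_Eop_in_SZ mone_in_SZ SZ_madd SZ_mneg SZ_mmul)

lemma divpow_ring_msmult_Ints:
  assumes "M \<in> divpow_ring d" "c \<in> \<int>"
  shows "msmult c M \<in> divpow_ring d"
proof -
  have nat: "msmult (of_nat n) M \<in> divpow_ring d" for n
  proof (induction n)
    case 0
    then show ?case
      using divpow_ring.zero by (simp add: msmult_def)
  next
    case (Suc n)
    have "msmult (of_nat (Suc n)) M = madd M (msmult (of_nat n) M)"
      by (simp add: msmult_def madd_def algebra_simps)
    then show ?case
      using Suc assms(1) divpow_ring.add by simp
  qed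
  obtain z where "c = of_int z"
    using assms(2) by (rule Ints_cases)
  moreover have "msmult (of_int z) M = mneg (msmult (of_nat (nat (- z))) M)" if "z < 0"
    using that by (simp add: msmult_def mneg_def)
  ultimately show ?thesis
    using nat[of "nat z"] nat[of "nat (- z)"] divpow_ring.neg by (cases "z < 0") auto
qed

lemma divpow_ring_sum:
  assumes "finite S" "\<And>u. u \<in> S \<Longrightarrow> X u \<in> divpow_ring d"
  shows "(\<lambda>i j. \<Sum>u\<in>S. X u i j) \<in> divpow_ring d"
  using assms
proof (induction S rule: finite_induct)
  case empty
  then show ?case
    using divpow_ring.zero by simp
next
  case (insert x F)
  then have "(\<lambda>i j. \<Sum>u\<in>insert x F. X u i j) = madd (X x) (\<lambda>i j. \<Sum>u\<in>F. X u i j)"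
    by (simp add: madd_def)
  then show ?case
    using insert divpow_ring.add by simp
qed

subsection \<open>Kostant's formula and the binomials in the Cartan elements\<close>

text \<open>\<^term>\<open>hbinom d s j\<close> is the binomial coefficient $\binom{H_1 - H_2 + s}{j}$: on a word
  with $x$ letters 2, the element $H_1 - H_2$ acts by $d - 2x$.\<close>

definition hbinom :: "nat \<Rightarrow> int \<Rightarrow> nat \<Rightarrow> mat" where
  "hbinom d s j = diag_mat d (\<lambda>x. of_int (int d - 2 * int x + s) gchoose j)"

lemma sum_choose_gchoose_shifted:
  fixes p q b d :: nat
  assumes "p + 2 * q \<le> d" "q \<le> b"
  shows "(\<Sum>u\<in>{q..b}. of_nat (p choose (u - q)) * ((of_int (int d - 2 * int (p - (u - q)) - 2 * int u) :: rat) gchoose (b - u)))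
    = of_nat ((d - p - 2 * q) choose (b - q))"
proof -
  define n where "n = b - q"
  define Y :: rat where "Y = of_int (int d - 2 * int p - 2 * int q)"
  have "{q..b} = {0 + q..n + q}"
    using assms by (simp add: n_def)
  then have "(\<Sum>u\<in>{q..b}. of_nat (p choose (u - q)) * ((of_int (int d - 2 * int (p - (u - q)) - 2 * int u) :: rat) gchoose (b - u)))
      = (\<Sum>t\<in>{0..n}. of_nat (p choose t) * ((of_int (int d - 2 * int (p - t) - 2 * int (t + q)) :: rat) gchoose (n - t)))"
    by (simp only: sum.shift_bounds_cl_nat_ivl) (simp add: n_def ac_simps)
  also have "\<dots> = (\<Sum>t\<in>{0..n}. (of_nat p gchoose t) * (Y gchoose (n - t)))"
  proof (intro sum.cong refl)
    fix t
    show "of_nat (p choose t) * ((of_int (int d - 2 * int (p - t) - 2 * int (t + q)) :: rat) gchoose (n - t))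
        = (of_nat p gchoose t) * (Y gchoose (n - t))"
      by (cases "t \<le> p") (simp_all add: Y_def binomial_gbinomial[symmetric] algebra_simps)
  qed
  also have "\<dots> = (of_nat p + Y) gchoose n"
    by (rule gbinomial_Vandermonde)
  also have "of_nat p + Y = of_nat (d - p - 2 * q)"
    using assms by (simp add: Y_def)
  finally show ?thesis
    by (simp add: n_def binomial_gbinomial)
qed

lemma overlap_compl:
  assumes "finite U" "I \<subseteq> U" "J \<subseteq> U" "overlap I J = (a, b, c)"
  shows "overlap (U - I) (U - J) = (c, card U - (a + b + c), a)"
proof -
  have "(U - I) - (U - J) = J - I" "(U - J) - (U - I) = I - J" "(U - I) \<inter> (U - J) = U - (I \<union> J)"
    using assms by blast+
  moreover have "card (U - (I \<union> J)) = card U - (a + b + c)"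
    using assms card_Un_Diff_Int_Diff[of I J] by (simp add: card_Diff_subset finite_subset overlap_def)
  ultimately show ?thesis
    using assms(4) by (simp add: overlap_def)
qed

lemma divpow_Eop_divpow_Fop_word_of:
  assumes I: "I \<subseteq> {..<d}" and J: "J \<subseteq> {..<d}" and ov: "overlap I J = (a', b', c')"
  shows "mmul d (divpow d (Eop d) b) (divpow d (Fop d) b) (word_of d I) (word_of d J)
    = (if a' = c' \<and> c' \<le> b then of_nat ((d - b' - 2 * c') choose (b - c')) else 0)"
proof -
  have "mmul d (divpow d (Eop d) b) (divpow d (Fop d) b)
      = swap_mat (mmul d (divpow d (Fop d) b) (mmul d (diag_mat d (\<lambda>_. 1)) (divpow d (Eop d) b)))"
    by (simp add: swap_mat_mmul swap_mat_divpow mone_eq_diag_mat[symmetric] mmul_mone_left)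
  then have "mmul d (divpow d (Eop d) b) (divpow d (Fop d) b) (word_of d I) (word_of d J)
      = (if c' \<le> b \<and> a' \<le> b \<and> b - c' = b - a' then of_nat ((d - (a' + b' + c')) choose (b - c')) * 1 else 0)"
    using I J by (simp add: swap_mat_word_of sandwich_word_of overlap_compl[OF _ I J ov])
  also have "\<dots> = (if a' = c' \<and> c' \<le> b then of_nat ((d - b' - 2 * c') choose (b - c')) else 0)"
  proof (cases "a' = c'")
    case True
    then have "d - (a' + b' + c') = d - b' - 2 * c'"
      by simp
    with True show ?thesis
      by simp
  qed auto
  finally show ?thesis .
qed

lemma kostant_divpow:
  "mmul d (divpow d (Eop d) b) (divpow d (Fop d) b)
    = (\<lambda>i j. \<Sum>u\<le>b. mmul d (divpow d (Fop d) u) (mmul d (hbinom d (- 2 * int u) (b - u)) (divpow d (Eop d) u)) i j)"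
proof (rule mat_eqI[of d])
  fix I J assume I: "I \<subseteq> {..<d}" and J: "J \<subseteq> {..<d}"
  obtain a' b' c' where ov: "overlap I J = (a', b', c')"
    by (metis prod_cases3)
  have le: "a' + b' + c' \<le> d"
    using overlap_in_triples[OF I J] ov by (simp add: triples_def)
  have "mmul d (divpow d (Fop d) u) (mmul d (hbinom d (- 2 * int u) (b - u)) (divpow d (Eop d) u)) (word_of d I) (word_of d J)
      = (if a' = c' \<and> c' \<le> u then of_nat (b' choose (u - c')) *
          ((of_int (int d - 2 * int (b' - (u - c')) - 2 * int u) :: rat) gchoose (b - u)) else 0)" for u
    unfolding hbinom_def using I J ov by (cases "a' = c'") (auto simp: sandwich_word_of)
  then have rhs: "(\<lambda>i j. \<Sum>u\<le>b. mmul d (divpow d (Fop d) u) (mmul d (hbinom d (- 2 * int u) (b - u)) (divpow d (Eop d) u)) i j)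
        (word_of d I) (word_of d J)
      = (\<Sum>u\<le>b. if a' = c' \<and> c' \<le> u then of_nat (b' choose (u - c')) *
          ((of_int (int d - 2 * int (b' - (u - c')) - 2 * int u) :: rat) gchoose (b - u)) else 0)"
    by simp
  show "mmul d (divpow d (Eop d) b) (divpow d (Fop d) b) (word_of d I) (word_of d J)
      = (\<lambda>i j. \<Sum>u\<le>b. mmul d (divpow d (Fop d) u) (mmul d (hbinom d (- 2 * int u) (b - u)) (divpow d (Eop d) u)) i j)
        (word_of d I) (word_of d J)"
    unfolding divpow_Eop_divpow_Fop_word_of[OF I J ov] rhs
  proof (cases "a' = c' \<and> c' \<le> b")
    case True
    have "{u\<in>{..b}. c' \<le> u} = {c'..b}"
      by auto
    moreover have "(\<Sum>u\<in>{c'..b}. of_nat (b' choose (u - c')) *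
          ((of_int (int d - 2 * int (b' - (u - c')) - 2 * int u) :: rat) gchoose (b - u)))
        = of_nat ((d - b' - 2 * c') choose (b - c'))"
      by (rule sum_choose_gchoose_shifted) (use True le in simp_all)
    ultimately show "(if a' = c' \<and> c' \<le> b then of_nat ((d - b' - 2 * c') choose (b - c')) else 0)
        = (\<Sum>u\<le>b. if a' = c' \<and> c' \<le> u then of_nat (b' choose (u - c')) *
          ((of_int (int d - 2 * int (b' - (u - c')) - 2 * int u) :: rat) gchoose (b - u)) else 0)"
      using True by (simp add: sum.inter_filter[symmetric])
  qed auto
qed (auto simp: hbinom_def)

lemma hbinom_in_divpow_ring: "hbinom d s j \<in> divpow_ring d"
proof (induction j arbitrary: s rule: less_induct)
  case (less b)
  let ?T = "\<lambda>u. mmul d (divpow d (Fop d) u) (mmul d (hbinom d (- 2 * int u) (b - u)) (divpow d (Eop d) u))"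
  have "?T 0 = hbinom d 0 b"
    by (simp add: hbinom_def mmul_mone_left mone_eq_diag_mat mmul_diag_mat)
  moreover have "{..b} = insert 0 {1..b}"
    by auto
  ultimately have "hbinom d 0 b = madd (mmul d (divpow d (Eop d) b) (divpow d (Fop d) b))
      (mneg (\<lambda>i j. \<Sum>u\<in>{1..b}. ?T u i j))"
    by (simp add: kostant_divpow madd_def mneg_def)
  moreover have "(\<lambda>i j. \<Sum>u\<in>{1..b}. ?T u i j) \<in> divpow_ring d"
  proof (rule divpow_ring_sum)
    fix u assume "u \<in> {1..b}"
    then have "hbinom d (- 2 * int u) (b - u) \<in> divpow_ring d"
      by (intro less) auto
    then show "?T u \<in> divpow_ring d"
      by (intro divpow_ring.mul divpow_ring.gen_e divpow_ring.gen_f)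
  qed simp
  moreover have "mmul d (divpow d (Eop d) b) (divpow d (Fop d) b) \<in> divpow_ring d"
    by (intro divpow_ring.mul divpow_ring.gen_e divpow_ring.gen_f)
  ultimately have zero: "hbinom d 0 b \<in> divpow_ring d"
    by (simp add: divpow_ring.add divpow_ring.neg)
  have "(of_int (int d - 2 * int x + s) :: rat) gchoose b
      = (\<Sum>k\<in>{0..b}. (of_int s gchoose (b - k)) * (of_int (int d - 2 * int x + 0) gchoose k))" for x
    using gbinomial_Vandermonde[of "of_int (int d - 2 * int x) :: rat" "of_int s" b] by (simp add: mult.commute)
  then have "hbinom d s b = (\<lambda>i j. \<Sum>k\<in>{0..b}. msmult (of_int s gchoose (b - k)) (hbinom d 0 k) i j)"
    by (simp add: hbinom_def diag_mat_sum msmult_diag_mat)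
  also have "\<dots> \<in> divpow_ring d"
  proof (rule divpow_ring_sum)
    fix k assume "k \<in> {0..b}"
    then have "hbinom d 0 k \<in> divpow_ring d"
      using zero less by (cases "k = b") auto
    then show "msmult (of_int s gchoose (b - k)) (hbinom d 0 k) \<in> divpow_ring d"
      by (rule divpow_ring_msmult_Ints) (simp add: of_int_gbinomial[symmetric])
  qed simp
  finally show ?case .
qed

lemma sum_alternating_choose_mult_choose:
  assumes "n \<le> N"
  shows "(\<Sum>j\<le>N. (- 1) ^ j * of_nat (j choose m) * of_nat (n choose j)) = (if n = m then (- 1) ^ m else (0 :: 'a::comm_ring_1))"
proof -
  let ?f = "\<lambda>j. (- 1) ^ j * of_nat (j choose m) * of_nat (n choose j) :: 'a"
  have "(\<Sum>j\<le>N. ?f j) = (\<Sum>j\<in>{m..n}. ?f j)"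
    using assms by (intro sum.mono_neutral_right) (auto simp: binomial_eq_0)
  also have "\<dots> = (\<Sum>j\<in>{m..n}. (- 1) ^ j * of_nat (n choose m) * of_nat ((n - m) choose (j - m)))"
  proof (intro sum.cong refl)
    fix j assume "j \<in> {m..n}"
    then have "(n choose j) * (j choose m) = (n choose m) * ((n - m) choose (j - m))"
      by (intro choose_mult) auto
    then show "?f j = (- 1) ^ j * of_nat (n choose m) * of_nat ((n - m) choose (j - m))"
      by (metis (no_types, lifting) mult.assoc mult.commute of_nat_mult)
  qed
  also have "\<dots> = (if n = m then (- 1) ^ m else 0)"
  proof (cases "m \<le> n")
    case True
    have "{m..n} = {0 + m..(n - m) + m}"
      using True by simp
    then have shift: "(\<Sum>j\<in>{m..n}. (- 1) ^ j * of_nat (n choose m) * of_nat ((n - m) choose (j - m)))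
        = (- 1) ^ m * of_nat (n choose m) * (\<Sum>i\<le>n - m. (- 1) ^ i * (of_nat ((n - m) choose i) :: 'a))"
      by (simp only: sum.shift_bounds_cl_nat_ivl) (simp add: sum_distrib_left power_add atLeast0AtMost algebra_simps)
    show ?thesis
    proof (cases "n = m")
      case False
      then have "(\<Sum>i\<le>n - m. (- 1) ^ i * (of_nat ((n - m) choose i) :: 'a)) = 0"
        using True by (intro choose_alternating_sum) simp
      then show ?thesis
        unfolding shift using False by simp
    qed simp
  qed simp
  finally show ?thesis .
qed

text \<open>The upper arguments are those of \<^term>\<open>hbinom d (int j - 1 - int d) j\<close>.\<close>

lemma weight_indicator_eq_sum:
  fixes x x0 d :: nat
  assumes "x \<le> d"
  shows "(if x = x0 then 1 else 0 :: rat)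
    = (\<Sum>j\<le>2 * d. of_nat (j choose (2 * x0)) * ((of_int (int d - 2 * int x + (int j - 1 - int d)) :: rat) gchoose j))"
proof -
  have "(of_int (int d - 2 * int x + (int j - 1 - int d)) :: rat) gchoose j = (- 1) ^ j * of_nat ((2 * x) choose j)" for j
    using gbinomial_negated_upper[of "of_nat j - 1 - 2 * of_nat x :: rat" j] by (simp add: binomial_gbinomial)
  then have "(\<Sum>j\<le>2 * d. of_nat (j choose (2 * x0)) * ((of_int (int d - 2 * int x + (int j - 1 - int d)) :: rat) gchoose j))
      = (\<Sum>j\<le>2 * d. (- 1) ^ j * of_nat (j choose (2 * x0)) * of_nat ((2 * x) choose j))"
    by (simp add: mult_ac)
  also have "\<dots> = (if 2 * x = 2 * x0 then 1 else 0)"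
    using assms by (simp add: sum_alternating_choose_mult_choose)
  finally show ?thesis
    by simp
qed

lemma diag_mat_in_divpow_ring:
  assumes "\<And>x. x \<le> d \<Longrightarrow> h x \<in> \<int>"
  shows "diag_mat d h \<in> divpow_ring d"
proof -
  have indicator: "diag_mat d (\<lambda>x. if x = x0 then 1 else 0) \<in> divpow_ring d" for x0
  proof -
    have "diag_mat d (\<lambda>x. if x = x0 then 1 else 0)
        = (\<lambda>i k. \<Sum>j\<le>2 * d. msmult (of_nat (j choose (2 * x0))) (hbinom d (int j - 1 - int d) j) i k)"
      by (simp add: diag_mat_cong[OF weight_indicator_eq_sum] diag_mat_sum msmult_diag_mat hbinom_def)
    also have "\<dots> \<in> divpow_ring d"
      by (intro divpow_ring_sum divpow_ring_msmult_Ints hbinom_in_divpow_ring) simp_all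
    finally show ?thesis .
  qed
  have "h x = (\<Sum>x0\<le>d. h x0 * (if x = x0 then 1 else 0))" if "x \<le> d" for x
  proof -
    have "(\<Sum>x0\<le>d. h x0 * (if x = x0 then 1 else 0)) = (\<Sum>x0\<le>d. if x = x0 then h x0 else 0)"
      by (intro sum.cong) auto
    then show ?thesis
      using that by simp
  qed
  then have "diag_mat d h = diag_mat d (\<lambda>x. \<Sum>x0\<le>d. h x0 * (if x = x0 then 1 else 0))"
    by (rule diag_mat_cong)
  also have "\<dots> = (\<lambda>i k. \<Sum>x0\<le>d. msmult (h x0) (diag_mat d (\<lambda>x. if x = x0 then 1 else 0)) i k)"
    by (simp add: diag_mat_sum msmult_diag_mat)
  also have "\<dots> \<in> divpow_ring d"
    using assms by (intro divpow_ring_sum divpow_ring_msmult_Ints indicator) simp_all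
  finally show ?thesis .
qed

lemma fhe_in_divpow_ring: "fhe d t \<in> divpow_ring d"
proof -
  have "mbinom d (H2op d) b \<in> divpow_ring d" for b
    unfolding mbinom_H2op by (rule diag_mat_in_divpow_ring) simp
  then show ?thesis
    by (auto simp: fhe_def intro!: divpow_ring.mul divpow_ring.gen_e divpow_ring.gen_f split: prod.splits)
qed

lemma SZ_subset_divpow_ring:
  assumes "M \<in> SZ d"
  shows "M \<in> divpow_ring d"
proof -
  obtain c where "M = (\<lambda>i j. \<Sum>t\<in>triples d. of_int (c t) * fhe d t i j)"
    using is_Z_basis_fhe[of d] assms unfolding is_Z_basis_def by blast
  also have "\<dots> = (\<lambda>i j. \<Sum>t\<in>triples d. msmult (of_int (c t)) (fhe d t) i j)"
    by (simp add: msmult_def)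
  also have "\<dots> \<in> divpow_ring d"
    by (intro divpow_ring_sum divpow_ring_msmult_Ints fhe_in_divpow_ring finite_triples) simp
  finally show ?thesis .
qed

theorem theorem2p4:
  fixes d :: nat
  shows "SZ d = divpow_ring d
    \<and> is_Z_basis (SZ d) (triples d)
           (\<lambda>(a,b,c). mmul d (divpow d (Fop d) a) (mmul d (mbinom d (H2op d) b) (divpow d (Eop d) c)))
    \<and> is_Z_basis (SZ d) (triples d)
           (\<lambda>(a,b,c). mmul d (divpow d (Eop d) a) (mmul d (mbinom d (H1op d) b) (divpow d (Fop d) c)))"
  using SZ_subset_divpow_ring divpow_ring_subset_SZ is_Z_basis_fhe[of d] is_Z_basis_ehf[of d]
  unfolding fhe_def ehf_def by blast

end
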